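(* Let $(R,\omega_\Omega,\alpha)$ be a represented system for an arbitrary group $G$. Let $B$ be the set of all eigenoperators of $\alpha$ together with the zero operator, let $C$ be the $*$-algebra generated by $B$, and set $N:=C''$. Then $(N,\omega_\Omega,\alpha)$ is a compact factor of $(R,\omega_\Omega,\alpha)$; that is, $\alpha_g(N)\subset N$ for all $g\in G$, and for every $a\in N$ the orbit $\{\alpha_g(a):g\in G\}$ is totally bounded with respect to $\|\cdot\|_\Omega$.
   Context: A represented system $(R,\omega_\Omega,\alpha)$ consists of a von Neumann algebra $R$ on a Hilbert space $H$, a unit vector $\Omega\in H$ cyclic and separating for $R$, the state $\omega_\Omega(a)=\langle\Omega,a\Omega\rangle$ on $R$, and a unitary representation $g\mapsto U_g$ of a group $G$ on $H$ with $U_g\Omega=\Omega$ and $U_gRU_g^*\subset R$ for all $g$, with $\alpha_g(a):=U_gaU_g^*$. An eigenoperator of $\alpha$ is an $a\in R\setminus\{0\}$ for which there is a function $\lambda_a:G\to\mathbb{C}$ with $\alpha_g(a)=\lambda_a(g)a$ for all $g$. $\|a\|_\Omega:=\omega_\Omega(a^*a)^{1/2}=\|a\Omega\|$. $S'$ denotes the commutant of $S\subset B(H)$. A factor of $(R,\omega_\Omega,\alpha)$ consists of a $*$-subalgebra $N\subset R$ with $\alpha_g(N)\subset N$ for all $g$ together with the restrictions of $\omega_\Omega$ and $\alpha_g$. *)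

theory Defs
  imports "HOL-Analysis.Analysis" "HOL-Algebra.Group"
begin

text \<open>HOL-Analysis has no complex inner product spaces, so we introduce the class of
complex Hilbert spaces: a complete real normed vector space with a complex scalar
multiplication extending the real one and a complex inner product (conjugate-linear
in the first, linear in the second argument) inducing the norm.\<close>

class complex_hilbert = real_normed_vector + complete_space +
  fixes scaleC :: "complex \<Rightarrow> 'a \<Rightarrow> 'a"
    and cinner :: "'a \<Rightarrow> 'a \<Rightarrow> complex"
  assumes scaleC_add_right: "scaleC c (x + y) = scaleC c x + scaleC c y"
    and scaleC_add_left: "scaleC (c + d) x = scaleC c x + scaleC d x"
    and scaleC_scaleC: "scaleC c (scaleC d x) = scaleC (c * d) x"
    and scaleC_one: "scaleC 1 x = x"
    and scaleR_scaleC: "scaleR r x = scaleC (complex_of_real r) x"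
    and cinner_add_right: "cinner x (y + z) = cinner x y + cinner x z"
    and cinner_scaleC_right: "cinner x (scaleC c y) = c * cinner x y"
    and cinner_commute: "cinner y x = cnj (cinner x y)"
    and cinner_self_nonneg: "0 \<le> Re (cinner x x)"
    and norm_cinner: "norm x = sqrt (Re (cinner x x))"

definition bounded_op :: "('h::complex_hilbert \<Rightarrow> 'h) \<Rightarrow> bool" where
  "bounded_op f \<longleftrightarrow>
     (\<forall>x y. f (x + y) = f x + f y) \<and> (\<forall>c x. f (scaleC c x) = scaleC c (f x)) \<and>
     (\<exists>K. \<forall>x. norm (f x) \<le> norm x * K)"

definition adj :: "('h::complex_hilbert \<Rightarrow> 'h) \<Rightarrow> ('h \<Rightarrow> 'h)" where
  "adj f = (SOME g. \<forall>x y. cinner (f x) y = cinner x (g y))"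

definition commutant :: "('h::complex_hilbert \<Rightarrow> 'h) set \<Rightarrow> ('h \<Rightarrow> 'h) set" where
  "commutant S = {b. bounded_op b \<and> (\<forall>a\<in>S. a \<circ> b = b \<circ> a)}"

definition zero_op :: "'h::complex_hilbert \<Rightarrow> 'h" where
  "zero_op = (\<lambda>x. 0)"

definition op_add :: "('h::complex_hilbert \<Rightarrow> 'h) \<Rightarrow> ('h \<Rightarrow> 'h) \<Rightarrow> ('h \<Rightarrow> 'h)" where
  "op_add a b = (\<lambda>x. a x + b x)"

definition op_scale :: "complex \<Rightarrow> ('h::complex_hilbert \<Rightarrow> 'h) \<Rightarrow> ('h \<Rightarrow> 'h)" where
  "op_scale c a = (\<lambda>x. scaleC c (a x))"

definition star_subalgebra :: "('h::complex_hilbert \<Rightarrow> 'h) set \<Rightarrow> bool" where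
  "star_subalgebra A \<longleftrightarrow> A \<subseteq> {f. bounded_op f} \<and>
     (\<forall>a\<in>A. \<forall>b\<in>A. op_add a b \<in> A) \<and> (\<forall>c. \<forall>a\<in>A. op_scale c a \<in> A) \<and>
     (\<forall>a\<in>A. \<forall>b\<in>A. a \<circ> b \<in> A) \<and> (\<forall>a\<in>A. adj a \<in> A)"

definition star_alg_gen :: "('h::complex_hilbert \<Rightarrow> 'h) set \<Rightarrow> ('h \<Rightarrow> 'h) set" where
  "star_alg_gen S = \<Inter>{A. S \<subseteq> A \<and> star_subalgebra A}"

definition von_neumann_algebra :: "('h::complex_hilbert \<Rightarrow> 'h) set \<Rightarrow> bool" where
  "von_neumann_algebra R \<longleftrightarrow> star_subalgebra R \<and> id \<in> R \<and> commutant (commutant R) = R"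

definition unitary :: "('h::complex_hilbert \<Rightarrow> 'h) \<Rightarrow> bool" where
  "unitary u \<longleftrightarrow> bounded_op u \<and> u \<circ> adj u = id \<and> adj u \<circ> u = id"

definition represented_system ::
  "('g, 'm) monoid_scheme \<Rightarrow> ('h::complex_hilbert \<Rightarrow> 'h) set \<Rightarrow> 'h \<Rightarrow> ('g \<Rightarrow> 'h \<Rightarrow> 'h) \<Rightarrow> bool" where
  "represented_system G R \<Omega> U \<longleftrightarrow>
     group G \<and> von_neumann_algebra R \<and>
     norm \<Omega> = 1 \<and>
     closure {a \<Omega> | a. a \<in> R} = UNIV \<and>
     (\<forall>a\<in>R. a \<Omega> = 0 \<longrightarrow> a = zero_op) \<and>
     (\<forall>g\<in>carrier G. unitary (U g)) \<and>
     (\<forall>g\<in>carrier G. \<forall>h\<in>carrier G. U (g \<otimes>\<^bsub>G\<^esub> h) = U g \<circ> U h) \<and>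
     U \<one>\<^bsub>G\<^esub> = id \<and>
     (\<forall>g\<in>carrier G. U g \<Omega> = \<Omega>) \<and>
     (\<forall>g\<in>carrier G. \<forall>a\<in>R. U g \<circ> a \<circ> adj (U g) \<in> R)"

definition alpha :: "('g \<Rightarrow> 'h::complex_hilbert \<Rightarrow> 'h) \<Rightarrow> 'g \<Rightarrow> ('h \<Rightarrow> 'h) \<Rightarrow> ('h \<Rightarrow> 'h)" where
  "alpha U g a = U g \<circ> a \<circ> adj (U g)"

definition eigenoperator ::
  "('g, 'm) monoid_scheme \<Rightarrow> ('h::complex_hilbert \<Rightarrow> 'h) set \<Rightarrow> ('g \<Rightarrow> 'h \<Rightarrow> 'h) \<Rightarrow> ('h \<Rightarrow> 'h) \<Rightarrow> bool" where
  "eigenoperator G R U a \<longleftrightarrow> a \<in> R \<and> a \<noteq> zero_op \<and>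
     (\<exists>lam::'g \<Rightarrow> complex. \<forall>g\<in>carrier G. alpha U g a = op_scale (lam g) a)"

definition omega_norm :: "'h::complex_hilbert \<Rightarrow> ('h \<Rightarrow> 'h) \<Rightarrow> real" where
  "omega_norm \<Omega> a = norm (a \<Omega>)"

definition totally_bounded_Omega :: "'h::complex_hilbert \<Rightarrow> ('h \<Rightarrow> 'h) set \<Rightarrow> bool" where
  "totally_bounded_Omega \<Omega> S \<longleftrightarrow>
     (\<forall>e>0. \<exists>k. finite k \<and> (\<forall>a\<in>S. \<exists>b\<in>k. omega_norm \<Omega> (\<lambda>x. a x - b x) < e))"

end

theory Submission
  imports Defs
begin

text \<open>
  The orbit of an eigenoperator \<open>b\<close> consists of the multiples \<open>\<lambda> b\<close>, and \<open>|\<lambda>| = 1\<close> because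
  \<open>\<Omega>\<close> is separating and \<open>U\<^sub>g\<close> is a unitary fixing \<open>\<Omega>\<close>. Hence the orbit of a finite sum
  \<open>b\<^sub>1 + \<dots> + b\<^sub>n\<close> of eigenoperators lies in \<open>{\<mu>\<^sub>1 b\<^sub>1 + \<dots> + \<mu>\<^sub>n b\<^sub>n | |\<mu>\<^sub>i| = 1}\<close>, which is
  totally bounded for \<open>\<parallel>\<cdot>\<parallel>\<^sub>\<Omega>\<close> as a continuous image of a torus; and \<open>C\<close> consists of such sums.
  For \<open>a \<in> N = C''\<close> the orthogonal projection onto \<open>closure (C \<Omega>)\<close> lies in \<open>C'\<close>, so
  it commutes with \<open>a\<close> and \<open>a \<Omega> \<in> closure (C \<Omega>)\<close>. Since \<open>\<parallel>\<alpha>\<^sub>g a - \<alpha>\<^sub>g c\<parallel>\<^sub>\<Omega> = \<parallel>a - c\<parallel>\<^sub>\<Omega>\<close>,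
  the orbit of \<open>a\<close> is uniformly approximated by orbits of elements of \<open>C\<close>, hence totally bounded.
  Invariance of \<open>N\<close> holds because \<open>C\<close> is invariant and \<open>\<alpha>\<^sub>g\<close> is a *-automorphism of \<open>B(H)\<close>.
\<close>

section \<open>Complex inner product spaces\<close>

lemma scaleC_zero_left [simp]: "scaleC 0 x = 0"
  using scaleR_scaleC[of 0 x] by simp

lemma scaleC_zero_right [simp]: "scaleC c 0 = 0"
  using scaleC_add_right[of c 0 0] by simp

lemma scaleC_minus_left: "scaleC (- c) x = - scaleC c x"
  using minus_unique[of "scaleC c x" "scaleC (-c) x"] scaleC_add_left[of c "-c" x] by simp

lemma scaleC_minus_right: "scaleC c (- x) = - scaleC c x"
  using minus_unique[of "scaleC c x" "scaleC c (-x)"] scaleC_add_right[of c x "-x"] by simp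

lemma scaleC_diff_right: "scaleC c (x - y) = scaleC c x - scaleC c y"
  using scaleC_add_right[of c x "-y"] by (simp add: scaleC_minus_right)

lemma scaleC_diff_left: "scaleC (c - d) x = scaleC c x - scaleC d x"
  using scaleC_add_left[of c "-d" x] by (simp add: scaleC_minus_left)

lemma cinner_zero_right [simp]: "cinner x 0 = 0"
  using cinner_add_right[of x 0 0] by simp

lemma cinner_zero_left [simp]: "cinner 0 x = 0"
  using cinner_commute[of 0 x] by simp

lemma cinner_add_left: "cinner (x + y) z = cinner x z + cinner y z"
  using cinner_commute[of "x+y" z] cinner_commute[of z x] cinner_commute[of z y]
  by (simp add: cinner_add_right)

lemma cinner_scaleC_left: "cinner (scaleC c x) y = cnj c * cinner x y"
  using cinner_commute[of "scaleC c x" y] cinner_commute[of y x] by (simp add: cinner_scaleC_right)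

lemma cinner_minus_right: "cinner x (- y) = - cinner x y"
  using minus_unique[of "cinner x y" "cinner x (-y)"] cinner_add_right[of x y "-y"] by simp

lemma cinner_minus_left: "cinner (- x) y = - cinner x y"
  using minus_unique[of "cinner x y" "cinner (-x) y"] cinner_add_left[of x "-x" y] by simp

lemma cinner_diff_right: "cinner x (y - z) = cinner x y - cinner x z"
  using cinner_add_right[of x y "-z"] by (simp add: cinner_minus_right)

lemma cinner_diff_left: "cinner (x - y) z = cinner x z - cinner y z"
  using cinner_add_left[of x "-y" z] by (simp add: cinner_minus_left)

lemma power2_norm_eq_cinner: "(norm x)\<^sup>2 = Re (cinner x x)"
  using norm_cinner[of x] cinner_self_nonneg[of x] by simp

lemma cinner_self_eq_power2_norm: "cinner x x = complex_of_real ((norm x)\<^sup>2)"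
proof -
  have "cnj (cinner x x) = cinner x x" using cinner_commute[of x x] by simp
  hence "Im (cinner x x) = 0" by (metis Reals_cnj_iff complex_is_Real_iff)
  thus ?thesis by (simp add: power2_norm_eq_cinner complex_eqI)
qed

lemma cinner_self_eq_0: "cinner x x = 0 \<longleftrightarrow> x = 0"
  by (simp add: cinner_self_eq_power2_norm)

lemma cinner_ext: "(\<And>z. cinner z x = cinner z y) \<Longrightarrow> x = y"
  using cinner_self_eq_0[of "x - y"] by (simp add: cinner_diff_right)

lemma Re_cinner_commute: "Re (cinner y x) = Re (cinner x y)"
  using cinner_commute[of y x] by simp

lemma norm_scaleC: "norm (scaleC c x) = cmod c * norm x"
proof -
  have "(norm (scaleC c x))\<^sup>2 = Re (cnj c * (c * cinner x x))"
    by (simp only: power2_norm_eq_cinner cinner_scaleC_left cinner_scaleC_right mult.left_commute)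
  also have "cnj c * (c * cinner x x) = (c * cnj c) * complex_of_real ((norm x)\<^sup>2)"
    by (simp add: cinner_self_eq_power2_norm)
  also have "\<dots> = complex_of_real ((cmod c * norm x)\<^sup>2)"
    by (simp only: complex_norm_square[symmetric] of_real_mult[symmetric] power_mult_distrib)
  finally have "(norm (scaleC c x))\<^sup>2 = (cmod c * norm x)\<^sup>2" by (simp only: Re_complex_of_real)
  thus ?thesis by (metis norm_ge_zero mult_nonneg_nonneg power2_eq_imp_eq)
qed

lemma bounded_linear_scaleC: "bounded_linear (scaleC c)"
proof (rule bounded_linear_intro[of _ "cmod c"])
  show "scaleC c (x + y) = scaleC c x + scaleC c y" for x y by (rule scaleC_add_right)
  show "scaleC c (scaleR r x) = scaleR r (scaleC c x)" for r x
    by (simp add: scaleR_scaleC scaleC_scaleC mult.commute)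
  show "norm (scaleC c x) \<le> norm x * cmod c" for x
    by (simp add: norm_scaleC mult.commute)
qed

lemma power2_norm_add: "(norm (x + y))\<^sup>2 = (norm x)\<^sup>2 + 2 * Re (cinner x y) + (norm y)\<^sup>2"
  by (simp add: power2_norm_eq_cinner cinner_add_left cinner_add_right Re_cinner_commute[of y x])

lemma power2_norm_diff: "(norm (x - y))\<^sup>2 = (norm x)\<^sup>2 - 2 * Re (cinner x y) + (norm y)\<^sup>2"
  by (simp add: power2_norm_eq_cinner cinner_diff_left cinner_diff_right Re_cinner_commute[of y x])

lemma power2_norm_diff_scaleC:
  "(norm (x - scaleC t y))\<^sup>2 = (norm x)\<^sup>2 - 2 * Re (t * cinner x y) + (cmod t)\<^sup>2 * (norm y)\<^sup>2"
  by (simp add: power2_norm_diff cinner_scaleC_right norm_scaleC power_mult_distrib)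

lemma parallelogram_law:
  fixes x y :: "'h::complex_hilbert"
  shows "(norm (x + y))\<^sup>2 + (norm (x - y))\<^sup>2 = 2 * (norm x)\<^sup>2 + 2 * (norm y)\<^sup>2"
  by (simp add: power2_norm_add power2_norm_diff)

lemma cinner_Cauchy_Schwarz: "cmod (cinner x y) \<le> norm x * norm y"
proof (cases "y = 0")
  case True thus ?thesis by simp
next
  case False
  define n where "n = (norm y)\<^sup>2"
  have n: "n > 0" using False by (simp add: n_def)
  define c where "c = cinner x y"
  define t where "t = cnj c / complex_of_real n"
  have "0 \<le> (norm (x - scaleC t y))\<^sup>2" by simp
  also have "\<dots> = (norm x)\<^sup>2 - 2 * Re (t * c) + (cmod t)\<^sup>2 * n"
    by (simp add: power2_norm_diff_scaleC c_def n_def)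
  also have "t * c = complex_of_real ((cmod c)\<^sup>2 / n)"
    using complex_norm_square[of c] by (simp add: t_def mult.commute)
  also have "(cmod t)\<^sup>2 * n = (cmod c)\<^sup>2 / n"
    using n by (simp add: t_def norm_divide power_divide power2_eq_square)
  finally have "(cmod c)\<^sup>2 \<le> (norm x)\<^sup>2 * n" using n by (simp add: divide_le_eq)
  hence "(cmod c)\<^sup>2 \<le> (norm x * norm y)\<^sup>2" by (simp add: n_def power_mult_distrib)
  thus ?thesis unfolding c_def by (meson mult_nonneg_nonneg norm_ge_zero power2_le_imp_le)
qed

section \<open>Closed subspaces and orthogonal projections\<close>

definition csubspace :: "'h::complex_hilbert set \<Rightarrow> bool" where
  "csubspace M \<longleftrightarrow> 0 \<in> M \<and> (\<forall>x\<in>M. \<forall>y\<in>M. x + y \<in> M) \<and> (\<forall>c. \<forall>x\<in>M. scaleC c x \<in> M)"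

lemma csubspace_diff: "csubspace M \<Longrightarrow> x \<in> M \<Longrightarrow> y \<in> M \<Longrightarrow> x - y \<in> M"
  unfolding csubspace_def by (metis diff_conv_add_uminus scaleC_minus_left scaleC_one)

lemma csubspace_closure:
  assumes M: "csubspace M"
  shows "csubspace (closure M)"
  unfolding csubspace_def
proof (intro conjI ballI allI)
  show "0 \<in> closure M" using M closure_subset by (auto simp: csubspace_def)
next
  fix x y assume "x \<in> closure M" "y \<in> closure M"
  then obtain f g where f: "\<forall>n. f n \<in> M" "f \<longlonglongrightarrow> x" and g: "\<forall>n. g n \<in> M" "g \<longlonglongrightarrow> y"
    by (meson closure_sequential)
  have "\<forall>n. f n + g n \<in> M" using f g M by (simp add: csubspace_def)
  moreover have "(\<lambda>n. f n + g n) \<longlonglongrightarrow> x + y" using f g by (intro tendsto_add)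
  ultimately show "x + y \<in> closure M"
    unfolding closure_sequential by (intro exI[of _ "\<lambda>n. f n + g n"]) simp
next
  fix c x assume "x \<in> closure M"
  hence "scaleC c x \<in> closure (scaleC c ` M)"
    using closure_bounded_linear_image_subset[OF bounded_linear_scaleC] by blast
  moreover have "scaleC c ` M \<subseteq> M" using M by (auto simp: csubspace_def)
  ultimately show "scaleC c x \<in> closure M" using closure_mono by blast
qed

lemma Cauchy_if_power2_dist_le:
  fixes X :: "nat \<Rightarrow> 'a::metric_space"
  assumes bound: "\<And>a b. (dist (X a) (X b))\<^sup>2 \<le> r a + r b" and r: "r \<longlonglongrightarrow> 0"
  shows "Cauchy X"
proof (rule metric_CauchyI)
  fix e :: real assume e: "0 < e"
  have "eventually (\<lambda>n. r n < e\<^sup>2 / 2) sequentially"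
    using order_tendstoD(2)[OF r, of "e\<^sup>2 / 2"] e by simp
  then obtain N where N: "\<And>n. n \<ge> N \<Longrightarrow> r n < e\<^sup>2 / 2" by (auto simp: eventually_sequentially)
  have "dist (X a) (X b) < e" if "a \<ge> N" "b \<ge> N" for a b
  proof -
    have "(dist (X a) (X b))\<^sup>2 < e\<^sup>2" using bound[of a b] N[OF that(1)] N[OF that(2)] by linarith
    thus ?thesis using e by (simp add: power2_less_imp_less)
  qed
  thus "\<exists>M. \<forall>a\<ge>M. \<forall>b\<ge>M. dist (X a) (X b) < e" by blast
qed

text \<open>The parallelogram law applied to \<open>v - m\<^sub>1\<close> and \<open>v - m\<^sub>2\<close>, whose half-sum is
  \<open>v\<close> minus the midpoint of \<open>m\<^sub>1\<close> and \<open>m\<^sub>2\<close>.\<close>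

lemma csubspace_near_points_close:
  assumes M: "csubspace M" and m: "m\<^sub>1 \<in> M" "m\<^sub>2 \<in> M"
    and d: "0 \<le> d" "\<forall>y\<in>M. d \<le> norm (v - y)"
  shows "(norm (m\<^sub>1 - m\<^sub>2))\<^sup>2 \<le> 2 * (norm (v - m\<^sub>1))\<^sup>2 + 2 * (norm (v - m\<^sub>2))\<^sup>2 - 4 * d\<^sup>2"
proof -
  define mid where "mid = scaleR (1/2) (m\<^sub>1 + m\<^sub>2)"
  have "mid \<in> M" using M m unfolding mid_def csubspace_def scaleR_scaleC by auto
  hence "d \<le> norm (v - mid)" using d by simp
  moreover have "(v - m\<^sub>1) + (v - m\<^sub>2) = scaleR 2 (v - mid)"
    by (simp add: mid_def algebra_simps scaleR_2)
  ultimately have "2 * d \<le> norm ((v - m\<^sub>1) + (v - m\<^sub>2))" by simp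
  hence "(2 * d)\<^sup>2 \<le> (norm ((v - m\<^sub>1) + (v - m\<^sub>2)))\<^sup>2"
    using d(1) by (intro power_mono) auto
  moreover have "norm ((v - m\<^sub>1) - (v - m\<^sub>2)) = norm (m\<^sub>1 - m\<^sub>2)"
    by (simp add: norm_minus_commute)
  ultimately show ?thesis
    using parallelogram_law[of "v - m\<^sub>1" "v - m\<^sub>2"] by (simp add: power_mult_distrib)
qed

lemma infdist_lessD:
  assumes "A \<noteq> {}" "infdist x A < r"
  shows "\<exists>a\<in>A. dist x a < r"
  using assms cInf_lessD[of "dist x ` A"] by (auto simp: infdist_notempty)

lemma csubspace_minimizing_sequence_Cauchy:
  assumes M: "csubspace M" and m: "\<And>n. m n \<in> M"
    and d: "0 \<le> d" "\<forall>y\<in>M. d \<le> norm (v - y)"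
    and near: "\<And>n. norm (v - m n) < d + inverse (real (Suc n))"
  shows "Cauchy m"
proof (rule Cauchy_if_power2_dist_le)
  define r where "r n = 2 * ((d + inverse (real (Suc n)))\<^sup>2 - d\<^sup>2)" for n
  show "(dist (m a) (m b))\<^sup>2 \<le> r a + r b" for a b
  proof -
    have "(norm (v - m n))\<^sup>2 \<le> (d + inverse (real (Suc n)))\<^sup>2" for n
      using near[of n] by (intro power_mono) auto
    from this[of a] this[of b] show ?thesis
      using csubspace_near_points_close[OF M m m d, of a b] unfolding r_def dist_norm by argo
  qed
  have "r \<longlonglongrightarrow> 2 * ((d + 0)\<^sup>2 - d\<^sup>2)"
    unfolding r_def by (intro tendsto_intros LIMSEQ_inverse_real_of_nat)
  thus "r \<longlonglongrightarrow> 0" by simp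
qed

lemma closed_csubspace_nearest_point:
  assumes M: "csubspace M" "closed M"
  shows "\<exists>m\<in>M. \<forall>y\<in>M. norm (v - m) \<le> norm (v - y)"
proof -
  have ne: "M \<noteq> {}" using M by (auto simp: csubspace_def)
  define d where "d = infdist v M"
  have d: "0 \<le> d" "\<forall>y\<in>M. d \<le> norm (v - y)"
    using infdist_le[of _ M v] by (auto simp: d_def infdist_nonneg dist_norm)
  have "\<exists>y\<in>M. norm (v - y) < d + inverse (real (Suc n))" for n
    using infdist_lessD[OF ne, of v "d + inverse (real (Suc n))"] by (simp add: d_def dist_norm)
  then obtain m where mM: "\<And>n. m n \<in> M" and near: "\<And>n. norm (v - m n) < d + inverse (real (Suc n))"
    by metis
  obtain l where lim: "m \<longlonglongrightarrow> l"
    using csubspace_minimizing_sequence_Cauchy[OF M(1) mM d near]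
    by (auto simp: Cauchy_convergent_iff convergent_def)
  have "l \<in> M" using M(2) lim mM closed_sequential_limits by blast
  moreover have "norm (v - l) \<le> d + 0"
  proof (rule LIMSEQ_le)
    show "(\<lambda>n. norm (v - m n)) \<longlonglongrightarrow> norm (v - l)" by (intro tendsto_intros lim)
    show "(\<lambda>n. d + inverse (real (Suc n))) \<longlonglongrightarrow> d + 0"
      by (intro tendsto_intros LIMSEQ_inverse_real_of_nat)
    show "\<exists>N. \<forall>n\<ge>N. norm (v - m n) \<le> d + inverse (real (Suc n))" using near less_imp_le by blast
  qed
  ultimately show ?thesis using d(2) by force
qed

text \<open>Otherwise moving from \<open>m\<close> towards \<open>v\<close> along \<open>y\<close> by a small multiple of
  \<open>cinner y (v - m)\<close> would decrease the distance to \<open>v\<close>.\<close>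

lemma nearest_point_orthogonal:
  assumes M: "csubspace M" and m: "m \<in> M" and nearest: "\<forall>y\<in>M. norm (v - m) \<le> norm (v - y)"
    and y: "y \<in> M"
  shows "cinner (v - m) y = 0"
proof -
  define w where "w = v - m"
  define c where "c = cinner w y"
  define s where "s = 1 / ((norm y)\<^sup>2 + 1)"
  have s0: "0 < s" and sy: "s * (norm y)\<^sup>2 < 1"
    using add_nonneg_pos[of "(norm y)\<^sup>2" 1] by (simp_all add: s_def field_simps)
  define t where "t = complex_of_real s * cnj c"
  have "m + scaleC t y \<in> M" using M m y by (simp add: csubspace_def)
  from nearest[rule_format, OF this] have "(norm w)\<^sup>2 \<le> (norm (w - scaleC t y))\<^sup>2"
    by (simp add: w_def algebra_simps)
  also have "\<dots> = (norm w)\<^sup>2 - 2 * Re (t * c) + (cmod t)\<^sup>2 * (norm y)\<^sup>2"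
    by (simp add: power2_norm_diff_scaleC c_def)
  also have "t * c = complex_of_real (s * (cmod c)\<^sup>2)"
    using complex_norm_square[of c] by (simp add: t_def mult.assoc mult.commute)
  also have "(cmod t)\<^sup>2 = s\<^sup>2 * (cmod c)\<^sup>2"
    using s0 by (simp add: t_def norm_mult power_mult_distrib)
  finally have "0 \<le> s * (cmod c)\<^sup>2 * (s * (norm y)\<^sup>2 - 2)"
    by (simp add: algebra_simps power2_eq_square)
  hence "s * (cmod c)\<^sup>2 \<le> 0"
    using sy by (smt (verit) mult_pos_neg)
  hence "(cmod c)\<^sup>2 \<le> 0" using s0 by (simp add: mult_le_0_iff)
  thus ?thesis by (simp add: c_def w_def)
qed

definition proj :: "'h::complex_hilbert set \<Rightarrow> 'h \<Rightarrow> 'h" where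
  "proj M v = (SOME m. m \<in> M \<and> (\<forall>y\<in>M. cinner (v - m) y = 0))"

lemma
  assumes "csubspace M" "closed M"
  shows proj_in: "proj M v \<in> M"
    and proj_orthogonal: "y \<in> M \<Longrightarrow> cinner (v - proj M v) y = 0"
proof -
  have "\<exists>m. m \<in> M \<and> (\<forall>y\<in>M. cinner (v - m) y = 0)"
    using closed_csubspace_nearest_point[OF assms, of v] nearest_point_orthogonal[OF assms(1)] by blast
  hence "proj M v \<in> M \<and> (\<forall>y\<in>M. cinner (v - proj M v) y = 0)"
    unfolding proj_def by (rule someI_ex)
  thus "proj M v \<in> M" "y \<in> M \<Longrightarrow> cinner (v - proj M v) y = 0" by auto
qed

lemma proj_unique:
  assumes M: "csubspace M" "closed M" and m: "m \<in> M" and orth: "\<forall>y\<in>M. cinner (v - m) y = 0"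
  shows "proj M v = m"
proof -
  have "proj M v - m \<in> M" using csubspace_diff[OF M(1) proj_in[OF M] m] .
  hence "cinner (v - m) (proj M v - m) - cinner (v - proj M v) (proj M v - m) = 0"
    using orth proj_orthogonal[OF M] by simp
  hence "cinner (proj M v - m) (proj M v - m) = 0" by (simp add: cinner_diff_left)
  thus ?thesis by (simp add: cinner_self_eq_0)
qed

lemma riesz_representation:
  fixes \<psi> :: "'h::complex_hilbert \<Rightarrow> complex"
  assumes add: "\<And>x y. \<psi> (x + y) = \<psi> x + \<psi> y"
    and scale: "\<And>c x. \<psi> (scaleC c x) = c * \<psi> x"
    and bound: "\<And>x. cmod (\<psi> x) \<le> norm x * K"
  shows "\<exists>z. \<forall>x. \<psi> x = cinner z x"
proof (cases "\<forall>x. \<psi> x = 0")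
  case True thus ?thesis by (intro exI[of _ 0]) simp
next
  case False
  then obtain w where w: "\<psi> w \<noteq> 0" by blast
  have zero: "\<psi> 0 = 0" using add[of 0 0] by simp
  have diff: "\<psi> (a - b) = \<psi> a - \<psi> b" for a b using add[of "a - b" b] by simp
  have "bounded_linear \<psi>"
    by (rule bounded_linear_intro[of _ K])
      (use add bound in \<open>simp_all add: scaleR_scaleC scale scaleR_conv_of_real\<close>)
  hence "closed {x. \<psi> x = 0}"
    by (intro closed_Collect_eq) (auto intro: linear_continuous_on)
  moreover have "csubspace {x. \<psi> x = 0}" unfolding csubspace_def using zero add scale by auto
  ultimately have ker: "csubspace {x. \<psi> x = 0}" "closed {x. \<psi> x = 0}" by auto
  define u where "u = w - proj {x. \<psi> x = 0} w"
  have pu: "\<psi> u \<noteq> 0" using w proj_in[OF ker, of w] by (simp add: u_def diff)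
  hence uu: "cinner u u \<noteq> 0" using zero by (auto simp: cinner_self_eq_0)
  define z where "z = scaleC (cnj (\<psi> u / cinner u u)) u"
  have "\<psi> x = cinner z x" for x
  proof -
    define q where "q = \<psi> x / \<psi> u"
    have "\<psi> (x - scaleC q u) = 0" using pu by (simp add: diff scale q_def)
    hence "cinner u (x - scaleC q u) = 0" using proj_orthogonal[OF ker] by (simp add: u_def)
    hence "cinner u x = q * cinner u u" by (simp add: cinner_diff_right cinner_scaleC_right)
    thus ?thesis using uu pu by (simp add: z_def cinner_scaleC_left q_def)
  qed
  thus ?thesis by blast
qed

section \<open>Bounded operators and adjoints\<close>

lemma bounded_opD:
  assumes "bounded_op f"
  shows "f (x + y) = f x + f y" "f (scaleC c x) = scaleC c (f x)"
    "\<exists>K\<ge>0. \<forall>x. norm (f x) \<le> norm x * K"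
proof -
  show "f (x + y) = f x + f y" "f (scaleC c x) = scaleC c (f x)"
    using assms by (auto simp: bounded_op_def)
  obtain K where K: "\<forall>x. norm (f x) \<le> norm x * K" using assms by (auto simp: bounded_op_def)
  have "norm (f x) \<le> norm x * \<bar>K\<bar>" for x
    using K[rule_format, of x] by (smt (verit) mult_left_mono norm_ge_zero)
  thus "\<exists>K\<ge>0. \<forall>x. norm (f x) \<le> norm x * K" by (intro exI[of _ "\<bar>K\<bar>"]) auto
qed

lemma bounded_op_zero: "bounded_op f \<Longrightarrow> f 0 = 0"
  using bounded_opD(1)[of f 0 0] by simp

lemma bounded_op_diff: "bounded_op f \<Longrightarrow> f (x - y) = f x - f y"
  using bounded_opD(1)[of f "x - y" y] by simp

lemma bounded_op_imp_bounded_linear: "bounded_op f \<Longrightarrow> bounded_linear f"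
proof -
  assume f: "bounded_op f"
  obtain K where K: "\<forall>x. norm (f x) \<le> norm x * K" using bounded_opD(3)[OF f] by blast
  show ?thesis
  proof (rule bounded_linear_intro[of _ K])
    show "f (x + y) = f x + f y" for x y by (rule bounded_opD(1)[OF f])
    show "f (scaleR r x) = scaleR r (f x)" for r x by (simp add: scaleR_scaleC bounded_opD(2)[OF f])
    show "norm (f x) \<le> norm x * K" for x using K by simp
  qed
qed

lemma bounded_op_comp: "bounded_op a \<Longrightarrow> bounded_op b \<Longrightarrow> bounded_op (a \<circ> b)"
proof -
  assume a: "bounded_op a" and b: "bounded_op b"
  obtain Ka where Ka: "Ka \<ge> 0" "\<forall>x. norm (a x) \<le> norm x * Ka" using bounded_opD(3)[OF a] by blast
  obtain Kb where Kb: "\<forall>x. norm (b x) \<le> norm x * Kb" using bounded_opD(3)[OF b] by blast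
  have "norm (a (b x)) \<le> norm x * (Kb * Ka)" for x
  proof -
    have "norm (a (b x)) \<le> norm (b x) * Ka" using Ka by blast
    also have "\<dots> \<le> (norm x * Kb) * Ka" using Kb Ka by (intro mult_right_mono) auto
    finally show ?thesis by (simp add: mult.assoc)
  qed
  thus ?thesis using a b unfolding bounded_op_def by auto
qed

lemma bounded_op_add: "bounded_op a \<Longrightarrow> bounded_op b \<Longrightarrow> bounded_op (op_add a b)"
proof -
  assume a: "bounded_op a" and b: "bounded_op b"
  obtain Ka where Ka: "\<forall>x. norm (a x) \<le> norm x * Ka" using bounded_opD(3)[OF a] by blast
  obtain Kb where Kb: "\<forall>x. norm (b x) \<le> norm x * Kb" using bounded_opD(3)[OF b] by blast
  have "norm (a x + b x) \<le> norm x * (Ka + Kb)" for x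
    using norm_triangle_ineq[of "a x" "b x"] Ka[rule_format, of x] Kb[rule_format, of x]
    by (simp add: distrib_left)
  thus ?thesis using a b unfolding bounded_op_def op_add_def
    by (auto simp: scaleC_add_right add_ac)
qed

lemma bounded_op_scale: "bounded_op a \<Longrightarrow> bounded_op (op_scale c a)"
proof -
  assume a: "bounded_op a"
  obtain Ka where Ka: "Ka \<ge> 0" "\<forall>x. norm (a x) \<le> norm x * Ka" using bounded_opD(3)[OF a] by blast
  have "norm (scaleC c (a x)) \<le> norm x * (cmod c * Ka)" for x
    using mult_left_mono[OF Ka(2)[rule_format, of x], of "cmod c"] by (simp add: norm_scaleC mult_ac)
  hence "\<exists>K. \<forall>x. norm (scaleC c (a x)) \<le> norm x * K" by blast
  thus ?thesis using a unfolding bounded_op_def op_scale_def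
    by (simp add: scaleC_add_right scaleC_scaleC mult.commute)
qed

lemma bounded_op_zero_op: "bounded_op zero_op"
  unfolding bounded_op_def zero_op_def by (auto intro: exI[of _ 0])

lemma adj_exists:
  assumes f: "bounded_op f"
  shows "\<exists>g. \<forall>x y. cinner (f x) y = cinner x (g y)"
proof -
  obtain K where K: "K \<ge> 0" "\<forall>x. norm (f x) \<le> norm x * K" using bounded_opD(3)[OF f] by blast
  have "\<exists>z. \<forall>x. cinner y (f x) = cinner z x" for y
  proof (rule riesz_representation[where K = "norm y * K"])
    show "cinner y (f (x1 + x2)) = cinner y (f x1) + cinner y (f x2)" for x1 x2
      by (simp add: bounded_opD(1)[OF f] cinner_add_right)
    show "cinner y (f (scaleC c x)) = c * cinner y (f x)" for c x
      by (simp add: bounded_opD(2)[OF f] cinner_scaleC_right)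
    show "cmod (cinner y (f x)) \<le> norm x * (norm y * K)" for x
    proof -
      have "cmod (cinner y (f x)) \<le> norm y * norm (f x)" by (rule cinner_Cauchy_Schwarz)
      also have "\<dots> \<le> norm y * (norm x * K)" using K by (intro mult_left_mono) auto
      finally show ?thesis by (simp add: mult_ac)
    qed
  qed
  then obtain g where "\<forall>y x. cinner y (f x) = cinner (g y) x" by metis
  hence "cinner (f x) y = cinner x (g y)" for x y
    using cinner_commute[of "f x" y] cinner_commute[of x "g y"] by simp
  thus ?thesis by blast
qed

lemma cinner_adj_right: "bounded_op f \<Longrightarrow> cinner (f x) y = cinner x (adj f y)"
  unfolding adj_def using someI_ex[OF adj_exists] by blast

lemma cinner_adj_left: "bounded_op f \<Longrightarrow> cinner (adj f x) y = cinner x (f y)"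
  using cinner_adj_right[of f y x] cinner_commute[of "f y" x] cinner_commute[of y "adj f x"] by simp

lemma adj_eqI:
  assumes "\<And>x y. cinner (a x) y = cinner x (g y)"
  shows "adj a = g"
proof
  have "\<exists>g. \<forall>x y. cinner (a x) y = cinner x (g y)" using assms by blast
  hence "\<forall>x y. cinner (a x) y = cinner x (adj a y)" unfolding adj_def by (rule someI_ex)
  thus "adj a y = g y" for y by (intro cinner_ext) (metis assms)
qed

lemma adj_adj: "bounded_op f \<Longrightarrow> adj (adj f) = f"
  by (rule adj_eqI) (rule cinner_adj_left)

lemma bounded_op_adj:
  assumes f: "bounded_op f"
  shows "bounded_op (adj f)"
proof -
  obtain K where K: "K \<ge> 0" "\<forall>x. norm (f x) \<le> norm x * K" using bounded_opD(3)[OF f] by blast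
  have "adj f (x + y) = adj f x + adj f y" for x y
    by (rule cinner_ext) (simp add: cinner_adj_right[OF f, symmetric] cinner_add_right)
  moreover have "adj f (scaleC c x) = scaleC c (adj f x)" for c x
    by (rule cinner_ext) (simp add: cinner_adj_right[OF f, symmetric] cinner_scaleC_right)
  moreover have "norm (adj f y) \<le> norm y * K" for y
  proof (cases "adj f y = 0")
    case True thus ?thesis using K by simp
  next
    case False
    have "(norm (adj f y))\<^sup>2 = Re (cinner (f (adj f y)) y)"
      by (simp add: power2_norm_eq_cinner cinner_adj_right[OF f])
    also have "\<dots> \<le> cmod (cinner (f (adj f y)) y)" by (rule complex_Re_le_cmod)
    also have "\<dots> \<le> norm (f (adj f y)) * norm y" by (rule cinner_Cauchy_Schwarz)
    also have "\<dots> \<le> (norm (adj f y) * K) * norm y" using K by (intro mult_right_mono) auto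
    finally have "norm (adj f y) * norm (adj f y) \<le> norm (adj f y) * (norm y * K)"
      by (simp add: power2_eq_square mult_ac)
    thus ?thesis using False by simp
  qed
  ultimately show ?thesis unfolding bounded_op_def by blast
qed

lemma adj_comp: "bounded_op a \<Longrightarrow> bounded_op b \<Longrightarrow> adj (a \<circ> b) = adj b \<circ> adj a"
  by (rule adj_eqI) (simp add: cinner_adj_right)

lemma adj_zero_op: "adj zero_op = (zero_op :: 'h::complex_hilbert \<Rightarrow> 'h)"
  by (rule adj_eqI) (simp add: zero_op_def)

lemma adj_add: "bounded_op a \<Longrightarrow> bounded_op b \<Longrightarrow> adj (op_add a b) = op_add (adj a) (adj b)"
  by (rule adj_eqI) (simp add: op_add_def cinner_adj_right cinner_add_left cinner_add_right)

lemma adj_scale: "bounded_op a \<Longrightarrow> adj (op_scale c a) = op_scale (cnj c) (adj a)"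
  by (rule adj_eqI) (simp add: op_scale_def cinner_adj_right cinner_scaleC_left cinner_scaleC_right)

lemma unitary_norm: "unitary u \<Longrightarrow> norm (u x) = norm x"
  using cinner_adj_right[of u x "u x"]
  by (simp add: unitary_def power2_norm_eq_cinner pointfree_idE flip: power2_eq_iff_nonneg[of "norm (u x)" "norm x"])

context
  fixes M :: "'h::complex_hilbert set"
  assumes M: "csubspace M" "closed M"
begin

lemma proj_add: "proj M (x + y) = proj M x + proj M y"
proof (rule proj_unique[OF M])
  show "proj M x + proj M y \<in> M" using M proj_in[OF M] by (simp add: csubspace_def)
  have eq: "x + y - (proj M x + proj M y) = (x - proj M x) + (y - proj M y)" by simp
  show "\<forall>z\<in>M. cinner (x + y - (proj M x + proj M y)) z = 0"
    unfolding eq cinner_add_left using proj_orthogonal[OF M] by simp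
qed

lemma proj_scaleC: "proj M (scaleC c x) = scaleC c (proj M x)"
proof (rule proj_unique[OF M])
  show "scaleC c (proj M x) \<in> M" using M proj_in[OF M] by (simp add: csubspace_def)
  show "\<forall>z\<in>M. cinner (scaleC c x - scaleC c (proj M x)) z = 0"
    by (simp add: cinner_scaleC_left proj_orthogonal[OF M] flip: scaleC_diff_right)
qed

lemma norm_proj_le: "norm (proj M x) \<le> norm x"
proof -
  have "cinner (x - proj M x) (proj M x) = 0" by (rule proj_orthogonal[OF M proj_in[OF M]])
  hence "cinner (proj M x) (x - proj M x) = 0" using cinner_commute[of "proj M x"] by simp
  hence "(norm x)\<^sup>2 = (norm (proj M x))\<^sup>2 + (norm (x - proj M x))\<^sup>2"
    using power2_norm_add[of "proj M x" "x - proj M x"] by simp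
  hence "(norm (proj M x))\<^sup>2 \<le> (norm x)\<^sup>2" by simp
  thus ?thesis by (rule power2_le_imp_le) simp
qed

lemma bounded_op_proj: "bounded_op (proj M)"
  unfolding bounded_op_def using proj_add proj_scaleC norm_proj_le by (metis mult.right_neutral)

text \<open>An operator leaving both \<open>M\<close> and its orthogonal complement invariant commutes with the
  projection; invariance of the complement is invariance of \<open>M\<close> under the adjoint.\<close>

lemma proj_commute:
  assumes c: "bounded_op c" and inv: "\<And>x. x \<in> M \<Longrightarrow> c x \<in> M" "\<And>x. x \<in> M \<Longrightarrow> adj c x \<in> M"
  shows "c \<circ> proj M = proj M \<circ> c"
proof
  fix v
  have "proj M (c v) = c (proj M v)"
  proof (rule proj_unique[OF M])
    show "c (proj M v) \<in> M" by (rule inv(1)[OF proj_in[OF M]])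
    show "\<forall>y\<in>M. cinner (c v - c (proj M v)) y = 0"
      using inv(2) by (simp add: cinner_adj_right[OF c] proj_orthogonal[OF M] flip: bounded_op_diff[OF c])
  qed
  thus "(c \<circ> proj M) v = (proj M \<circ> c) v" by simp
qed

end

section \<open>Commutants\<close>

lemma commutant_antimono: "S \<subseteq> T \<Longrightarrow> commutant T \<subseteq> commutant S"
  unfolding commutant_def by auto

lemma comp_op_add_left: "op_add a b \<circ> c = op_add (a \<circ> c) (b \<circ> c)"
  by (simp add: op_add_def fun_eq_iff)

lemma comp_op_add_right: "bounded_op c \<Longrightarrow> c \<circ> op_add a b = op_add (c \<circ> a) (c \<circ> b)"
  by (simp add: op_add_def fun_eq_iff bounded_opD(1))

lemma comp_op_scale_left: "op_scale k a \<circ> c = op_scale k (a \<circ> c)"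
  by (simp add: op_scale_def fun_eq_iff)

lemma comp_op_scale_right: "bounded_op c \<Longrightarrow> c \<circ> op_scale k a = op_scale k (c \<circ> a)"
  by (simp add: op_scale_def fun_eq_iff bounded_opD(2))

lemma star_subalgebra_commutant:
  assumes bounded: "S \<subseteq> {f. bounded_op f}" and adj_closed: "\<forall>a\<in>S. adj a \<in> S"
  shows "star_subalgebra (commutant S)"
  unfolding star_subalgebra_def
proof (intro conjI ballI allI)
  show "commutant S \<subseteq> {f. bounded_op f}" unfolding commutant_def by auto
next
  fix a b assume a: "a \<in> commutant S" and b: "b \<in> commutant S"
  have ab: "bounded_op a" "bounded_op b" using a b by (auto simp: commutant_def)
  show "op_add a b \<in> commutant S"
    using a b bounded bounded_op_add[OF ab]
    by (auto simp: commutant_def comp_op_add_left comp_op_add_right)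
  have "s \<circ> (a \<circ> b) = (a \<circ> b) \<circ> s" if s: "s \<in> S" for s
  proof -
    have "s \<circ> (a \<circ> b) = (s \<circ> a) \<circ> b" by (simp add: comp_assoc)
    also have "\<dots> = a \<circ> (s \<circ> b)" using a s by (simp add: commutant_def comp_assoc)
    also have "\<dots> = (a \<circ> b) \<circ> s" using b s by (simp add: commutant_def comp_assoc)
    finally show ?thesis .
  qed
  thus "a \<circ> b \<in> commutant S" using bounded_op_comp[OF ab] by (simp add: commutant_def)
next
  fix c a assume a: "a \<in> commutant S"
  thus "op_scale c a \<in> commutant S"
    using bounded bounded_op_scale
    by (auto simp: commutant_def comp_op_scale_left comp_op_scale_right)
next
  fix a assume a: "a \<in> commutant S"
  have ba: "bounded_op a" using a by (auto simp: commutant_def)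
  have "s \<circ> adj a = adj a \<circ> s" if s: "s \<in> S" for s
  proof -
    have bs: "bounded_op s" "bounded_op (adj s)" using bounded adj_closed s by auto
    have "s \<circ> adj a = adj (a \<circ> adj s)" using adj_comp[OF ba bs(2)] adj_adj[OF bs(1)] by simp
    also have "a \<circ> adj s = adj s \<circ> a" using a adj_closed s by (simp add: commutant_def)
    also have "adj (adj s \<circ> a) = adj a \<circ> s" using adj_comp[OF bs(2) ba] adj_adj[OF bs(1)] by simp
    finally show ?thesis .
  qed
  thus "adj a \<in> commutant S" using bounded_op_adj[OF ba] by (simp add: commutant_def)
qed

lemma star_subalgebra_double_commutant:
  assumes "star_subalgebra C"
  shows "star_subalgebra (commutant (commutant C))"
proof -
  have "star_subalgebra (commutant C)"
    using assms by (intro star_subalgebra_commutant) (simp_all add: star_subalgebra_def)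
  thus ?thesis by (intro star_subalgebra_commutant) (simp_all add: star_subalgebra_def)
qed

lemma star_subalgebra_apply_closure:
  assumes C: "star_subalgebra C" and c: "c \<in> C" and x: "x \<in> closure {b v | b. b \<in> C}"
  shows "c x \<in> closure {b v | b. b \<in> C}"
proof -
  have "bounded_linear c" using C c by (auto simp: star_subalgebra_def bounded_op_imp_bounded_linear)
  hence "c x \<in> closure (c ` {b v | b. b \<in> C})" using x closure_bounded_linear_image_subset by blast
  moreover have "c ` {b v | b. b \<in> C} \<subseteq> {b v | b. b \<in> C}"
  proof
    fix y assume "y \<in> c ` {b v | b. b \<in> C}"
    then obtain b where b: "b \<in> C" "y = (c \<circ> b) v" by auto
    moreover have "c \<circ> b \<in> C" using C c b(1) by (simp add: star_subalgebra_def)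
    ultimately show "y \<in> {b v | b. b \<in> C}" by blast
  qed
  ultimately show ?thesis using closure_mono by blast
qed

lemma star_subalgebra_csubspace_apply:
  assumes C: "star_subalgebra C" "id \<in> C"
  shows "csubspace {b v | b. b \<in> C}"
  unfolding csubspace_def
proof (intro conjI ballI allI)
  have "op_scale 0 id \<in> C" using C by (simp add: star_subalgebra_def)
  thus "0 \<in> {b v | b. b \<in> C}" by (force simp: op_scale_def)
  show "x + y \<in> {b v | b. b \<in> C}" if xy: "x \<in> {b v | b. b \<in> C}" "y \<in> {b v | b. b \<in> C}" for x y
  proof -
    obtain a b where ab: "a \<in> C" "b \<in> C" "x = a v" "y = b v" using xy by blast
    hence "op_add a b \<in> C" "x + y = op_add a b v" using C by (simp_all add: star_subalgebra_def op_add_def)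
    thus ?thesis by blast
  qed
  show "scaleC k x \<in> {b v | b. b \<in> C}" if x: "x \<in> {b v | b. b \<in> C}" for k x
  proof -
    obtain a where a: "a \<in> C" "x = a v" using x by blast
    hence "op_scale k a \<in> C" "scaleC k x = op_scale k a v" using C by (simp_all add: star_subalgebra_def op_scale_def)
    thus ?thesis by blast
  qed
qed

lemma double_commutant_apply_in_closure:
  assumes C: "star_subalgebra C" "id \<in> C" and a: "a \<in> commutant (commutant C)"
  shows "a v \<in> closure {b v | b. b \<in> C}"
proof -
  define M where "M = closure {b v | b. b \<in> C}"
  have M: "csubspace M" "closed M"
    unfolding M_def using csubspace_closure[OF star_subalgebra_csubspace_apply[OF C]] by auto
  have "c \<circ> proj M = proj M \<circ> c" if c: "c \<in> C" for c
  proof (rule proj_commute[OF M])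
    show "bounded_op c" using C(1) c by (simp add: star_subalgebra_def subset_eq)
    have "adj c \<in> C" using C(1) c by (simp add: star_subalgebra_def)
    thus "\<And>x. x \<in> M \<Longrightarrow> adj c x \<in> M"
      using star_subalgebra_apply_closure[OF C(1)] unfolding M_def by blast
    show "\<And>x. x \<in> M \<Longrightarrow> c x \<in> M"
      using star_subalgebra_apply_closure[OF C(1) c] unfolding M_def .
  qed
  hence "proj M \<in> commutant C" using bounded_op_proj[OF M] by (simp add: commutant_def)
  hence "proj M \<circ> a = a \<circ> proj M" using a unfolding commutant_def by blast
  hence "proj M (a v) = a (proj M v)" by (simp add: fun_eq_iff)
  moreover have "v = id v" by simp
  hence "v \<in> M" using C(2) closure_subset[of "{b v | b. b \<in> C}"] unfolding M_def by blast
  hence "proj M v = v" by (intro proj_unique[OF M]) simp_all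
  ultimately have "a v = proj M (a v)" by simp
  thus ?thesis using proj_in[OF M, of "a v"] unfolding M_def by simp
qed

section \<open>Total boundedness of phase-rotated sums\<close>

lemma totally_bounded_Omega_subset:
  "totally_bounded_Omega \<Omega> S \<Longrightarrow> T \<subseteq> S \<Longrightarrow> totally_bounded_Omega \<Omega> T"
  unfolding totally_bounded_Omega_def by (meson subsetD)

lemma totally_bounded_Omega_singleton: "totally_bounded_Omega \<Omega> {a}"
  unfolding totally_bounded_Omega_def omega_norm_def by (intro allI impI exI[of _ "{a}"]) simp

lemma totally_bounded_Omega_sums:
  assumes S: "totally_bounded_Omega \<Omega> S" and T: "totally_bounded_Omega \<Omega> T"
  shows "totally_bounded_Omega \<Omega> {op_add s t | s t. s \<in> S \<and> t \<in> T}"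
  unfolding totally_bounded_Omega_def
proof (intro allI impI)
  fix e :: real assume "0 < e"
  hence e2: "0 < e/2" by simp
  obtain k where k: "finite k" "\<forall>s\<in>S. \<exists>b\<in>k. omega_norm \<Omega> (\<lambda>x. s x - b x) < e/2"
    using S[unfolded totally_bounded_Omega_def, rule_format, OF e2] by blast
  obtain l where l: "finite l" "\<forall>t\<in>T. \<exists>b\<in>l. omega_norm \<Omega> (\<lambda>x. t x - b x) < e/2"
    using T[unfolded totally_bounded_Omega_def, rule_format, OF e2] by blast
  have near: "\<exists>b\<in>(\<lambda>(b, c). op_add b c) ` (k \<times> l). omega_norm \<Omega> (\<lambda>x. op_add s t x - b x) < e"
    if st: "s \<in> S" "t \<in> T" for s t
  proof -
    obtain b where b: "b \<in> k" "norm (s \<Omega> - b \<Omega>) < e/2"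
      using k(2) st(1) unfolding omega_norm_def by blast
    obtain c where c: "c \<in> l" "norm (t \<Omega> - c \<Omega>) < e/2"
      using l(2) st(2) unfolding omega_norm_def by blast
    have "norm (op_add s t \<Omega> - op_add b c \<Omega>) \<le> norm (s \<Omega> - b \<Omega>) + norm (t \<Omega> - c \<Omega>)"
      using norm_triangle_ineq[of "s \<Omega> - b \<Omega>" "t \<Omega> - c \<Omega>"] by (simp add: op_add_def algebra_simps)
    thus ?thesis using b c by (intro bexI[of _ "op_add b c"]) (auto simp: omega_norm_def)
  qed
  show "\<exists>K. finite K \<and> (\<forall>a\<in>{op_add s t | s t. s \<in> S \<and> t \<in> T}.
          \<exists>b\<in>K. omega_norm \<Omega> (\<lambda>x. a x - b x) < e)"
  proof (intro exI conjI ballI)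
    show "finite ((\<lambda>(b, c). op_add b c) ` (k \<times> l))" using k(1) l(1) by simp
    fix a assume "a \<in> {op_add s t | s t. s \<in> S \<and> t \<in> T}"
    then obtain s t where "s \<in> S" "t \<in> T" "a = op_add s t" by blast
    thus "\<exists>b\<in>(\<lambda>(b, c). op_add b c) ` (k \<times> l). omega_norm \<Omega> (\<lambda>x. a x - b x) < e"
      using near by blast
  qed
qed

lemma totally_bounded_Omega_phases:
  "totally_bounded_Omega \<Omega> {op_scale \<mu> a | \<mu>. cmod \<mu> = 1}"
  unfolding totally_bounded_Omega_def
proof (intro allI impI)
  fix e :: real assume e: "0 < e"
  define n where "n = norm (a \<Omega>)"
  have "0 \<le> n" by (simp add: n_def)
  hence n: "0 \<le> n" "n / (n + 1) < 1" by (simp_all add: divide_less_eq)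
  define \<delta> where "\<delta> = e / (n + 1)"
  have \<delta>: "0 < \<delta>" using e n(1) by (simp add: \<delta>_def)
  have cover: "sphere (0::complex) 1 \<subseteq> (\<Union>\<nu>\<in>sphere 0 1. ball \<nu> \<delta>)"
    using \<delta> centre_in_ball by blast
  obtain k where k: "k \<subseteq> sphere 0 1" "finite k" "sphere (0::complex) 1 \<subseteq> (\<Union>\<nu>\<in>k. ball \<nu> \<delta>)"
    by (rule compactE_image[OF compact_sphere open_ball cover])
  have "\<exists>b\<in>(\<lambda>\<nu>. op_scale \<nu> a) ` k. omega_norm \<Omega> (\<lambda>x. op_scale \<mu> a x - b x) < e"
    if \<mu>: "cmod \<mu> = 1" for \<mu>
  proof -
    have "\<mu> \<in> sphere 0 1" using \<mu> by simp
    then obtain \<nu> where "\<nu> \<in> k" "\<mu> \<in> ball \<nu> \<delta>" using k(3) by blast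
    hence \<nu>: "\<nu> \<in> k" "dist \<nu> \<mu> < \<delta>" by simp_all
    have "omega_norm \<Omega> (\<lambda>x. op_scale \<mu> a x - op_scale \<nu> a x) = dist \<nu> \<mu> * n"
      by (simp add: omega_norm_def op_scale_def norm_scaleC n_def dist_norm norm_minus_commute
          flip: scaleC_diff_left)
    also have "\<dots> \<le> \<delta> * n" using \<nu>(2) n(1) by (intro mult_right_mono) auto
    also have "\<dots> = e * (n / (n + 1))" by (simp add: \<delta>_def)
    also have "\<dots> < e" using mult_strict_left_mono[OF n(2) e] by simp
    finally show ?thesis using \<nu>(1) by blast
  qed
  thus "\<exists>K. finite K \<and> (\<forall>b\<in>{op_scale \<mu> a | \<mu>. cmod \<mu> = 1}. \<exists>c\<in>K. omega_norm \<Omega> (\<lambda>x. b x - c x) < e)"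
    using k(2) by blast
qed

lemma totally_bounded_Omega_approx:
  assumes "\<And>e. 0 < e \<Longrightarrow> \<exists>T. totally_bounded_Omega \<Omega> T \<and> (\<forall>a\<in>S. \<exists>b\<in>T. omega_norm \<Omega> (\<lambda>x. a x - b x) < e)"
  shows "totally_bounded_Omega \<Omega> S"
  unfolding totally_bounded_Omega_def
proof (intro allI impI)
  fix e :: real assume "0 < e"
  hence e2: "0 < e/2" by simp
  obtain T where T: "totally_bounded_Omega \<Omega> T" "\<forall>a\<in>S. \<exists>b\<in>T. norm (a \<Omega> - b \<Omega>) < e/2"
    using assms[OF e2] unfolding omega_norm_def by blast
  obtain k where k: "finite k" "\<forall>b\<in>T. \<exists>c\<in>k. norm (b \<Omega> - c \<Omega>) < e/2"
    using T(1)[unfolded totally_bounded_Omega_def omega_norm_def, rule_format, OF e2] by blast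
  have "\<exists>c\<in>k. norm (a \<Omega> - c \<Omega>) < e" if a: "a \<in> S" for a
  proof -
    obtain b where b: "b \<in> T" "norm (a \<Omega> - b \<Omega>) < e/2" using T(2) a by blast
    obtain c where c: "c \<in> k" "norm (b \<Omega> - c \<Omega>) < e/2" using k(2) b(1) by blast
    have "norm (a \<Omega> - c \<Omega>) \<le> norm (a \<Omega> - b \<Omega>) + norm (b \<Omega> - c \<Omega>)"
      using norm_triangle_ineq[of "a \<Omega> - b \<Omega>" "b \<Omega> - c \<Omega>"] by simp
    hence "norm (a \<Omega> - c \<Omega>) < e" using b(2) c(2) by linarith
    thus ?thesis using c(1) by blast
  qed
  thus "\<exists>k. finite k \<and> (\<forall>a\<in>S. \<exists>c\<in>k. omega_norm \<Omega> (\<lambda>x. a x - c x) < e)"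
    unfolding omega_norm_def using k(1) by blast
qed

primrec sumop :: "('h::complex_hilbert \<Rightarrow> 'h) list \<Rightarrow> ('h \<Rightarrow> 'h)" where
  "sumop [] = zero_op"
| "sumop (a # xs) = op_add a (sumop xs)"

lemma sumop_single: "sumop [a] = a"
  by (simp add: fun_eq_iff op_add_def zero_op_def)

lemma sumop_append: "sumop (xs @ ys) = op_add (sumop xs) (sumop ys)"
  by (induction xs) (simp_all add: fun_eq_iff op_add_def zero_op_def add.assoc)

lemma sumop_scale: "sumop (map (op_scale c) xs) = op_scale c (sumop xs)"
  by (induction xs) (simp_all add: fun_eq_iff op_add_def zero_op_def op_scale_def scaleC_add_right)

lemma bounded_op_sumop: "\<forall>a\<in>set xs. bounded_op a \<Longrightarrow> bounded_op (sumop xs)"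
  by (induction xs) (simp_all add: bounded_op_zero_op bounded_op_add)

lemma adj_sumop: "\<forall>a\<in>set xs. bounded_op a \<Longrightarrow> adj (sumop xs) = sumop (map adj xs)"
  by (induction xs) (simp_all add: adj_zero_op adj_add bounded_op_sumop)

lemma comp_sumop_right: "bounded_op c \<Longrightarrow> c \<circ> sumop ys = sumop (map ((\<circ>) c) ys)"
  by (induction ys) (simp_all add: fun_eq_iff op_add_def zero_op_def bounded_opD(1) bounded_op_zero)

lemma sumop_comp_sumop:
  "\<forall>a\<in>set xs. bounded_op a \<Longrightarrow> sumop xs \<circ> sumop ys = sumop (concat (map (\<lambda>a. map ((\<circ>) a) ys) xs))"
proof (induction xs)
  case Nil thus ?case by (simp add: fun_eq_iff zero_op_def)
next
  case (Cons a xs)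
  have "sumop (a # xs) \<circ> sumop ys = op_add (a \<circ> sumop ys) (sumop xs \<circ> sumop ys)"
    by (simp add: comp_op_add_left)
  also have "a \<circ> sumop ys = sumop (map ((\<circ>) a) ys)" using Cons.prems by (simp add: comp_sumop_right)
  also have "sumop xs \<circ> sumop ys = sumop (concat (map (\<lambda>a. map ((\<circ>) a) ys) xs))"
    by (rule Cons.IH) (use Cons.prems in simp)
  finally show ?case by (simp only: list.map concat.simps sumop_append)
qed

primrec phase_sums :: "('h::complex_hilbert \<Rightarrow> 'h) list \<Rightarrow> ('h \<Rightarrow> 'h) set" where
  "phase_sums [] = {zero_op}"
| "phase_sums (a # xs) =
     {op_add s t | s t. s \<in> {op_scale \<mu> a | \<mu>. cmod \<mu> = 1} \<and> t \<in> phase_sums xs}"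

lemma totally_bounded_Omega_phase_sums: "totally_bounded_Omega \<Omega> (phase_sums xs)"
proof (induction xs)
  case Nil show ?case unfolding phase_sums.simps by (rule totally_bounded_Omega_singleton)
next
  case (Cons a xs) show ?case
    unfolding phase_sums.simps by (rule totally_bounded_Omega_sums[OF totally_bounded_Omega_phases Cons.IH])
qed

section \<open>Represented systems\<close>

locale represented =
  fixes G :: "('g, 'm) monoid_scheme"
    and R :: "('h::complex_hilbert \<Rightarrow> 'h) set"
    and \<Omega> :: "'h"
    and U :: "'g \<Rightarrow> 'h \<Rightarrow> 'h"
  assumes represented_system: "represented_system G R \<Omega> U"
begin

lemma group: "group G"
  and R_star: "star_subalgebra R"
  and id_in_R: "id \<in> R"
  and R_double_commutant: "commutant (commutant R) = R"
  and norm_Omega: "norm \<Omega> = 1"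
  and separating: "a \<in> R \<Longrightarrow> a \<Omega> = 0 \<Longrightarrow> a = zero_op"
  and unitary_U: "g \<in> carrier G \<Longrightarrow> unitary (U g)"
  and U_mult: "g \<in> carrier G \<Longrightarrow> h \<in> carrier G \<Longrightarrow> U (g \<otimes>\<^bsub>G\<^esub> h) = U g \<circ> U h"
  and U_one: "U \<one>\<^bsub>G\<^esub> = id"
  and U_Omega: "g \<in> carrier G \<Longrightarrow> U g \<Omega> = \<Omega>"
  using represented_system by (auto simp: represented_system_def von_neumann_algebra_def)

lemma bounded_op_U: "g \<in> carrier G \<Longrightarrow> bounded_op (U g)"
  using unitary_U by (simp add: unitary_def)

lemma bounded_op_adj_U: "g \<in> carrier G \<Longrightarrow> bounded_op (adj (U g))"
  using bounded_op_U bounded_op_adj by blast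

lemma U_adj_U: "g \<in> carrier G \<Longrightarrow> U g (adj (U g) x) = x"
  and adj_U_U: "g \<in> carrier G \<Longrightarrow> adj (U g) (U g x) = x"
  using unitary_U by (simp_all add: unitary_def pointfree_idE)

lemma adj_U: assumes g: "g \<in> carrier G" shows "adj (U g) = U (inv\<^bsub>G\<^esub> g)"
proof -
  have ig: "inv\<^bsub>G\<^esub> g \<in> carrier G" using g group by (simp add: group.inv_closed)
  have "U g \<circ> U (inv\<^bsub>G\<^esub> g) = id" using U_mult[OF g ig] g group U_one by (simp add: group.r_inv)
  hence "adj (U g) = adj (U g) \<circ> (U g \<circ> U (inv\<^bsub>G\<^esub> g))" by simp
  also have "\<dots> = U (inv\<^bsub>G\<^esub> g)" using adj_U_U[OF g] by (simp add: fun_eq_iff)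
  finally show ?thesis .
qed

lemma alpha_apply_Omega: "g \<in> carrier G \<Longrightarrow> alpha U g a \<Omega> = U g (a \<Omega>)"
  using adj_U U_Omega group by (simp add: alpha_def group.inv_closed)

lemma omega_norm_alpha_diff:
  assumes g: "g \<in> carrier G"
  shows "omega_norm \<Omega> (\<lambda>x. alpha U g a x - alpha U g b x) = omega_norm \<Omega> (\<lambda>x. a x - b x)"
  using unitary_norm[OF unitary_U[OF g]]
  by (simp add: omega_norm_def alpha_apply_Omega[OF g] flip: bounded_op_diff[OF bounded_op_U[OF g]])

lemma bounded_op_alpha: "g \<in> carrier G \<Longrightarrow> bounded_op a \<Longrightarrow> bounded_op (alpha U g a)"
  unfolding alpha_def by (intro bounded_op_comp bounded_op_U bounded_op_adj_U)

lemma alpha_comp: "g \<in> carrier G \<Longrightarrow> alpha U g (a \<circ> b) = alpha U g a \<circ> alpha U g b"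
  by (simp add: alpha_def fun_eq_iff adj_U_U)

lemma alpha_add: "g \<in> carrier G \<Longrightarrow> alpha U g (op_add a b) = op_add (alpha U g a) (alpha U g b)"
  by (simp add: alpha_def fun_eq_iff op_add_def bounded_opD(1)[OF bounded_op_U])

lemma alpha_scale: "g \<in> carrier G \<Longrightarrow> alpha U g (op_scale c a) = op_scale c (alpha U g a)"
  by (simp add: alpha_def fun_eq_iff op_scale_def bounded_opD(2)[OF bounded_op_U])

lemma alpha_zero: "g \<in> carrier G \<Longrightarrow> alpha U g zero_op = zero_op"
  by (simp add: alpha_def fun_eq_iff zero_op_def bounded_op_zero[OF bounded_op_U])

lemma alpha_id: "g \<in> carrier G \<Longrightarrow> alpha U g id = id"
  by (simp add: alpha_def fun_eq_iff U_adj_U)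

lemma alpha_adj:
  assumes g: "g \<in> carrier G" and a: "bounded_op a"
  shows "alpha U g (adj a) = adj (alpha U g a)"
proof -
  have "adj (alpha U g a) = adj (U g \<circ> (a \<circ> adj (U g)))" by (simp add: alpha_def comp_assoc)
  also have "\<dots> = (adj (adj (U g)) \<circ> adj a) \<circ> adj (U g)"
    using g a by (simp add: adj_comp bounded_op_comp bounded_op_U bounded_op_adj_U)
  also have "\<dots> = alpha U g (adj a)" by (simp add: adj_adj[OF bounded_op_U[OF g]] alpha_def)
  finally show ?thesis by simp
qed

lemma alpha_alpha_inv: "g \<in> carrier G \<Longrightarrow> alpha U g (alpha U (inv\<^bsub>G\<^esub> g) a) = a"
  using group adj_U[of g] adj_U[of "inv\<^bsub>G\<^esub> g"] U_adj_U[of g] adj_U_U[of g]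
  by (simp add: alpha_def fun_eq_iff group.inv_closed group.inv_inv)

lemma alpha_commutant:
  assumes inv: "\<forall>g\<in>carrier G. \<forall>a\<in>S. alpha U g a \<in> S"
  shows "\<forall>g\<in>carrier G. \<forall>s\<in>commutant S. alpha U g s \<in> commutant S"
proof (intro ballI)
  fix g s assume g: "g \<in> carrier G" and s: "s \<in> commutant S"
  have "c \<circ> alpha U g s = alpha U g s \<circ> c" if c: "c \<in> S" for c
  proof -
    define d where "d = alpha U (inv\<^bsub>G\<^esub> g) c"
    have "d \<in> S" using inv g c group by (simp add: d_def group.inv_closed)
    hence "d \<circ> s = s \<circ> d" using s by (simp add: commutant_def)
    moreover have "c = alpha U g d" using alpha_alpha_inv[OF g] by (simp add: d_def)
    ultimately show ?thesis by (simp add: alpha_comp[OF g, symmetric])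
  qed
  moreover have "bounded_op (alpha U g s)" using s g by (simp add: commutant_def bounded_op_alpha)
  ultimately show "alpha U g s \<in> commutant S" by (simp add: commutant_def)
qed

definition eigen_ops :: "('h \<Rightarrow> 'h) set" where
  "eigen_ops = {a. eigenoperator G R U a} \<union> {zero_op}"

definition eigen_alg :: "('h \<Rightarrow> 'h) set" where
  "eigen_alg = star_alg_gen eigen_ops"

lemma zero_op_in_R: "zero_op \<in> R"
proof -
  have "op_scale 0 id \<in> R" using R_star id_in_R by (simp add: star_subalgebra_def)
  thus ?thesis by (simp add: op_scale_def zero_op_def fun_eq_iff flip: zero_op_def)
qed

lemma eigen_ops_subset_R: "eigen_ops \<subseteq> R"
  using zero_op_in_R by (auto simp: eigen_ops_def eigenoperator_def)

lemma eigen_ops_subset_eigen_alg: "eigen_ops \<subseteq> eigen_alg"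
  unfolding eigen_alg_def star_alg_gen_def by auto

lemma eigen_alg_least: "eigen_ops \<subseteq> A \<Longrightarrow> star_subalgebra A \<Longrightarrow> eigen_alg \<subseteq> A"
  unfolding eigen_alg_def star_alg_gen_def by auto

lemma eigen_alg_subset_R: "eigen_alg \<subseteq> R"
  by (rule eigen_alg_least[OF eigen_ops_subset_R R_star])

lemma star_subalgebra_eigen_alg: "star_subalgebra eigen_alg"
  using eigen_ops_subset_R R_star
  unfolding eigen_alg_def star_alg_gen_def star_subalgebra_def by (auto simp: subset_eq)

lemma id_in_eigen_alg: "id \<in> eigen_alg"
proof -
  have "id \<noteq> (zero_op :: 'h \<Rightarrow> 'h)"
  proof
    assume "id = (zero_op :: 'h \<Rightarrow> 'h)"
    hence "id \<Omega> = zero_op \<Omega>" by (rule fun_cong)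
    hence "\<Omega> = 0" by (simp add: zero_op_def)
    thus False using norm_Omega by simp
  qed
  moreover have "op_scale 1 id = (id :: 'h \<Rightarrow> 'h)" by (simp add: op_scale_def scaleC_one fun_eq_iff)
  ultimately have "eigenoperator G R U id"
    using id_in_R alpha_id unfolding eigenoperator_def by (intro conjI exI[of _ "\<lambda>_. 1"]) auto
  thus ?thesis using eigen_ops_subset_eigen_alg by (auto simp: eigen_ops_def)
qed

lemma alpha_eigen_alg: "\<forall>g\<in>carrier G. \<forall>a\<in>eigen_alg. alpha U g a \<in> eigen_alg"
proof -
  define D where "D = {a \<in> eigen_alg. \<forall>g\<in>carrier G. alpha U g a \<in> eigen_alg}"
  have "star_subalgebra D"
    using star_subalgebra_eigen_alg unfolding star_subalgebra_def D_def
    by (auto simp: alpha_add alpha_scale alpha_comp alpha_adj)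
  moreover have "eigen_ops \<subseteq> D"
  proof
    fix a assume a: "a \<in> eigen_ops"
    have "alpha U g a \<in> eigen_alg" if g: "g \<in> carrier G" for g
    proof (cases "a = zero_op")
      case False
      then obtain lam where "alpha U g a = op_scale (lam g) a"
        using a g by (auto simp: eigen_ops_def eigenoperator_def)
      thus ?thesis using a eigen_ops_subset_eigen_alg star_subalgebra_eigen_alg
        by (auto simp: star_subalgebra_def)
    qed (use g a eigen_ops_subset_eigen_alg alpha_zero in auto)
    thus "a \<in> D" using a eigen_ops_subset_eigen_alg by (auto simp: D_def)
  qed
  ultimately show ?thesis using eigen_alg_least by (auto simp: D_def)
qed

definition unimodular_eigen_ops :: "('h \<Rightarrow> 'h) set" where
  "unimodular_eigen_ops =
     {a \<in> R. \<exists>lam. \<forall>g\<in>carrier G. alpha U g a = op_scale (lam g) a \<and> cmod (lam g) = 1}"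

lemma eigenoperator_unimodular:
  assumes a: "eigenoperator G R U a"
  shows "a \<in> unimodular_eigen_ops"
proof -
  obtain lam where lam: "\<forall>g\<in>carrier G. alpha U g a = op_scale (lam g) a"
    and aR: "a \<in> R" and a0: "a \<noteq> zero_op"
    using a by (auto simp: eigenoperator_def)
  have aO: "a \<Omega> \<noteq> 0" using separating[OF aR] a0 by blast
  have "cmod (lam g) = 1" if g: "g \<in> carrier G" for g
  proof -
    have "cmod (lam g) * norm (a \<Omega>) = norm (alpha U g a \<Omega>)"
      using lam g by (simp add: op_scale_def norm_scaleC)
    also have "\<dots> = norm (a \<Omega>)" by (simp add: alpha_apply_Omega[OF g] unitary_norm[OF unitary_U[OF g]])
    finally show ?thesis using aO by simp
  qed
  thus ?thesis using lam aR by (auto simp: unimodular_eigen_ops_def)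
qed

lemma zero_op_unimodular: "zero_op \<in> unimodular_eigen_ops"
  using zero_op_in_R alpha_zero unfolding unimodular_eigen_ops_def
  by (intro CollectI conjI exI[of _ "\<lambda>_. 1"]) (auto simp: op_scale_def zero_op_def fun_eq_iff)

lemma bounded_op_unimodular: "a \<in> unimodular_eigen_ops \<Longrightarrow> bounded_op a"
  using R_star by (auto simp: unimodular_eigen_ops_def star_subalgebra_def)

lemma unimodular_scale:
  assumes a: "a \<in> unimodular_eigen_ops"
  shows "op_scale c a \<in> unimodular_eigen_ops"
proof -
  obtain lam where "\<forall>g\<in>carrier G. alpha U g a = op_scale (lam g) a \<and> cmod (lam g) = 1"
    using a by (auto simp: unimodular_eigen_ops_def)
  hence "\<forall>g\<in>carrier G. alpha U g (op_scale c a) = op_scale (lam g) (op_scale c a) \<and> cmod (lam g) = 1"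
    by (simp add: alpha_scale) (simp add: op_scale_def scaleC_scaleC mult.commute)
  thus ?thesis using R_star a by (auto simp: unimodular_eigen_ops_def star_subalgebra_def)
qed

lemma unimodular_comp:
  assumes a: "a \<in> unimodular_eigen_ops" and b: "b \<in> unimodular_eigen_ops"
  shows "a \<circ> b \<in> unimodular_eigen_ops"
proof -
  obtain la lb where la: "\<forall>g\<in>carrier G. alpha U g a = op_scale (la g) a \<and> cmod (la g) = 1"
    and lb: "\<forall>g\<in>carrier G. alpha U g b = op_scale (lb g) b \<and> cmod (lb g) = 1"
    using a b by (auto simp: unimodular_eigen_ops_def)
  have "\<forall>g\<in>carrier G. alpha U g (a \<circ> b) = op_scale (la g * lb g) (a \<circ> b) \<and> cmod (la g * lb g) = 1"
    using la lb bounded_opD(2)[OF bounded_op_unimodular[OF a]]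
    by (simp add: alpha_comp op_scale_def fun_eq_iff scaleC_scaleC norm_mult)
  thus ?thesis using R_star a b by (auto simp: unimodular_eigen_ops_def star_subalgebra_def)
qed

lemma unimodular_adj:
  assumes a: "a \<in> unimodular_eigen_ops"
  shows "adj a \<in> unimodular_eigen_ops"
proof -
  obtain la where "\<forall>g\<in>carrier G. alpha U g a = op_scale (la g) a \<and> cmod (la g) = 1"
    using a by (auto simp: unimodular_eigen_ops_def)
  hence "\<forall>g\<in>carrier G. alpha U g (adj a) = op_scale (cnj (la g)) (adj a) \<and> cmod (cnj (la g)) = 1"
    using bounded_op_unimodular[OF a] by (simp add: alpha_adj adj_scale)
  thus ?thesis using R_star a by (auto simp: unimodular_eigen_ops_def star_subalgebra_def)
qed

definition eigen_sums :: "('h \<Rightarrow> 'h) set" where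
  "eigen_sums = {sumop xs | xs. set xs \<subseteq> unimodular_eigen_ops}"

lemma eigen_sumsI: "set xs \<subseteq> unimodular_eigen_ops \<Longrightarrow> sumop xs \<in> eigen_sums"
  unfolding eigen_sums_def by blast

lemma star_subalgebra_eigen_sums: "star_subalgebra eigen_sums"
  unfolding star_subalgebra_def
proof (intro conjI ballI allI subsetI)
  fix a assume "a \<in> eigen_sums"
  thus "a \<in> {f. bounded_op f}"
    using bounded_op_unimodular by (auto simp: eigen_sums_def intro!: bounded_op_sumop)
next
  fix a b assume "a \<in> eigen_sums" "b \<in> eigen_sums"
  then obtain xs ys where xs: "set xs \<subseteq> unimodular_eigen_ops" "a = sumop xs"
    and ys: "set ys \<subseteq> unimodular_eigen_ops" "b = sumop ys"
    by (auto simp: eigen_sums_def)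
  show "op_add a b \<in> eigen_sums"
    using eigen_sumsI[of "xs @ ys"] xs ys by (simp add: sumop_append)
  have "a \<circ> b = sumop (concat (map (\<lambda>a. map ((\<circ>) a) ys) xs))"
    using xs ys bounded_op_unimodular by (auto intro: sumop_comp_sumop)
  moreover have "set (concat (map (\<lambda>a. map ((\<circ>) a) ys) xs)) \<subseteq> unimodular_eigen_ops"
    using xs ys unimodular_comp by auto
  ultimately show "a \<circ> b \<in> eigen_sums" using eigen_sumsI by simp
next
  fix c a assume "a \<in> eigen_sums"
  then obtain xs where "set xs \<subseteq> unimodular_eigen_ops" "a = sumop xs" by (auto simp: eigen_sums_def)
  thus "op_scale c a \<in> eigen_sums"
    using eigen_sumsI[of "map (op_scale c) xs"] unimodular_scale by (auto simp: sumop_scale)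
next
  fix a assume "a \<in> eigen_sums"
  then obtain xs where "set xs \<subseteq> unimodular_eigen_ops" "a = sumop xs" by (auto simp: eigen_sums_def)
  moreover have "\<forall>a\<in>set xs. bounded_op a" using \<open>set xs \<subseteq> _\<close> bounded_op_unimodular by auto
  ultimately show "adj a \<in> eigen_sums"
    using eigen_sumsI[of "map adj xs"] unimodular_adj by (auto simp: adj_sumop)
qed

lemma eigen_alg_subset_eigen_sums: "eigen_alg \<subseteq> eigen_sums"
proof (rule eigen_alg_least[OF _ star_subalgebra_eigen_sums])
  show "eigen_ops \<subseteq> eigen_sums"
  proof
    fix a assume "a \<in> eigen_ops"
    hence "a \<in> unimodular_eigen_ops"
      using eigenoperator_unimodular zero_op_unimodular by (auto simp: eigen_ops_def)
    thus "a \<in> eigen_sums" using eigen_sumsI[of "[a]"] unfolding sumop_single by simp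
  qed
qed

lemma alpha_sumop_in_phase_sums:
  "set xs \<subseteq> unimodular_eigen_ops \<Longrightarrow> g \<in> carrier G \<Longrightarrow> alpha U g (sumop xs) \<in> phase_sums xs"
proof (induction xs)
  case Nil thus ?case by (simp add: alpha_zero)
next
  case (Cons a xs)
  then obtain la where "alpha U g a = op_scale (la g) a" "cmod (la g) = 1"
    by (auto simp: unimodular_eigen_ops_def)
  moreover have "alpha U g (sumop xs) \<in> phase_sums xs" using Cons by simp
  ultimately show ?case using Cons.prems by (simp add: alpha_add) blast
qed

lemma totally_bounded_orbit_eigen_alg:
  "c \<in> eigen_alg \<Longrightarrow> totally_bounded_Omega \<Omega> {alpha U g c | g. g \<in> carrier G}"
  using eigen_alg_subset_eigen_sums alpha_sumop_in_phase_sums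
  by (fastforce simp: eigen_sums_def
      intro: totally_bounded_Omega_subset[OF totally_bounded_Omega_phase_sums])

lemma totally_bounded_orbit_double_commutant:
  assumes a: "a \<in> commutant (commutant eigen_alg)"
  shows "totally_bounded_Omega \<Omega> {alpha U g a | g. g \<in> carrier G}"
proof (rule totally_bounded_Omega_approx)
  fix e :: real assume "0 < e"
  moreover have "a \<Omega> \<in> closure {c \<Omega> | c. c \<in> eigen_alg}"
    using double_commutant_apply_in_closure[OF star_subalgebra_eigen_alg id_in_eigen_alg a] .
  ultimately obtain c where c: "c \<in> eigen_alg" "omega_norm \<Omega> (\<lambda>x. a x - c x) < e"
    unfolding closure_approachable by (auto simp: omega_norm_def dist_norm norm_minus_commute)
  have "omega_norm \<Omega> (\<lambda>x. alpha U g a x - alpha U g c x) < e" if "g \<in> carrier G" for g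
    using c(2) omega_norm_alpha_diff[OF that] by simp
  thus "\<exists>T. totally_bounded_Omega \<Omega> T \<and>
      (\<forall>b\<in>{alpha U g a | g. g \<in> carrier G}. \<exists>d\<in>T. omega_norm \<Omega> (\<lambda>x. b x - d x) < e)"
    using totally_bounded_orbit_eigen_alg[OF c(1)] by blast
qed

end

theorem proposition6p5:
  fixes G :: "('g, 'm) monoid_scheme"
    and R :: "('h::complex_hilbert \<Rightarrow> 'h) set"
    and \<Omega> :: "'h"
    and U :: "'g \<Rightarrow> 'h \<Rightarrow> 'h"
  assumes "represented_system G R \<Omega> U"
  defines "B \<equiv> {a. eigenoperator G R U a} \<union> {zero_op}"
  defines "C \<equiv> star_alg_gen B"
  defines "N \<equiv> commutant (commutant C)"
  shows "N \<subseteq> R \<and> star_subalgebra N \<and>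
         (\<forall>g\<in>carrier G. \<forall>a\<in>N. alpha U g a \<in> N) \<and>
         (\<forall>a\<in>N. totally_bounded_Omega \<Omega> {alpha U g a | g. g \<in> carrier G})"
proof -
  interpret represented G R \<Omega> U by (rule represented.intro) (rule assms(1))
  have C: "C = eigen_alg" unfolding C_def B_def eigen_alg_def eigen_ops_def ..
  have "N \<subseteq> commutant (commutant R)"
    unfolding N_def C by (intro commutant_antimono eigen_alg_subset_R)
  moreover have "star_subalgebra N"
    unfolding N_def C by (rule star_subalgebra_double_commutant[OF star_subalgebra_eigen_alg])
  moreover have "\<forall>g\<in>carrier G. \<forall>a\<in>N. alpha U g a \<in> N"
    unfolding N_def C by (intro alpha_commutant alpha_eigen_alg)
  ultimately show ?thesis
    using R_double_commutant totally_bounded_orbit_double_commutant by (simp add: N_def C)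
qed

end
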